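(* Let $n\ge 2$ and let $v_1,\dots,v_n\in\mathbb{R}^3$ be unit vectors, no two of which are parallel. Then the real symmetric $n\times n$ matrix $S=(\|v_i\times v_j\|)_{i,j=1}^n$ is non-singular and has signature $(1,n-1)$, i.e. it has exactly one positive eigenvalue and exactly $n-1$ negative eigenvalues.
   Context: $\times$ denotes the cross product on $\mathbb{R}^3$ and $\|\cdot\|$ the Euclidean norm; in particular the diagonal entries of $S$ are $0$. *)

theory Defs
  imports "HOL-Analysis.Cross3" "Jordan_Normal_Form.Char_Poly"
begin

definition eigen_count :: "real Matrix.mat \<Rightarrow> (real \<Rightarrow> bool) \<Rightarrow> nat" where
  "eigen_count A P = (\<Sum>a\<in>{a. P a \<and> eigenvalue A a}. order a (char_poly A))"

end

theory Submission
  imports Defs "HOL-Analysis.Generalised_Binomial_Theorem" "Jordan_Normal_Form.Jordan_Normal_Form_Existence"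
begin

text \<open>Write \<open>S = J - E\<close>, where \<open>J\<close> is the all-ones matrix. Since
  \<open>\<parallel>v\<^sub>i \<times> v\<^sub>j\<parallel> = sqrt (1 - (v\<^sub>i \<bullet> v\<^sub>j)\<^sup>2)\<close> and
  \<open>1 - sqrt (1 - t) = \<Sum>\<^sub>k c\<^sub>k t\<^sup>k\<close> with \<open>c\<^sub>0 = 0\<close>, \<open>c\<^sub>k > 0\<close> and \<open>\<Sum>\<^sub>k c\<^sub>k \<le> 1\<close>,
  the matrix \<open>E\<close> is the sum of the Schur powers \<open>c\<^sub>k ((v\<^sub>i \<bullet> v\<^sub>j)\<^sup>2\<^sup>k)\<close>, all
  positive semidefinite, plus the non-negative multiple \<open>1 - \<Sum>\<^sub>k c\<^sub>k\<close> of the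
  identity; non-parallelity makes \<open>E\<close> positive definite. Hence \<open>S\<close> is negative
  definite on the hyperplane \<open>\<Sum>\<^sub>i x\<^sub>i = 0\<close>, so at most one eigenvalue is
  \<open>\<ge> 0\<close>, and as the trace of \<open>S\<close> vanishes, exactly one is positive.\<close>

definition one_minus_sqrt_coeff :: "nat \<Rightarrow> real" where
  "one_minus_sqrt_coeff k = (if k = 0 then 0 else - (((1/2) gchoose k) * (-1)^k))"

lemma gbinomial_half_mult_sign_Suc:
  "((1/2::real) gchoose Suc k) * (-1)^Suc k
     = ((1/2) gchoose k) * (-1)^k * ((real k - 1/2) / (real k + 1))"
proof -
  have "(1/2::real) * ((1/2) gchoose k) = real k * ((1/2) gchoose k) + real (Suc k) * ((1/2) gchoose Suc k)"
    by (rule gbinomial_mult_1)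
  hence "((1/2::real) gchoose Suc k) = (1/2 - real k) / (real k + 1) * ((1/2) gchoose k)"
    by (simp add: field_simps)
  hence "((1/2::real) gchoose Suc k) * (-1)^Suc k
      = - ((1/2 - real k) / (real k + 1) * ((1/2) gchoose k) * (-1)^k)"
    by simp
  also have "\<dots> = ((1/2) gchoose k) * (-1)^k * ((real k - 1/2) / (real k + 1))"
    by (simp add: divide_simps) (simp add: algebra_simps)
  finally show ?thesis .
qed

lemma gbinomial_half_mult_sign_neg: "k \<ge> 1 \<Longrightarrow> ((1/2::real) gchoose k) * (-1)^k < 0"
proof (induction k rule: dec_induct)
  case base
  show ?case by (simp add: gbinomial_Suc)
next
  case (step k)
  have "(real k - 1/2) / (real k + 1) > 0" using step(1) by auto
  thus ?case by (metis gbinomial_half_mult_sign_Suc mult_neg_pos step(3))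
qed

lemma one_minus_sqrt_coeff_pos: "k \<ge> 1 \<Longrightarrow> one_minus_sqrt_coeff k > 0"
  using gbinomial_half_mult_sign_neg[of k] by (simp add: one_minus_sqrt_coeff_def)

lemma one_minus_sqrt_coeff_nonneg: "one_minus_sqrt_coeff k \<ge> 0"
  using one_minus_sqrt_coeff_pos[of k] by (cases k) (auto simp: one_minus_sqrt_coeff_def)

lemma one_minus_sqrt_coeff_sums:
  assumes "0 \<le> t" "t < 1"
  shows "(\<lambda>k. one_minus_sqrt_coeff k * t^k) sums (1 - sqrt (1 - t))"
proof -
  have "\<bar>-t\<bar> < 1" using assms by auto
  from gen_binomial_real[OF this, of "1/2"]
  have "(\<lambda>k. ((1/2::real) gchoose k) * (-t)^k) sums sqrt (1 - t)"
    using assms by (simp add: powr_half_sqrt)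
  hence "(\<lambda>k. - (((1/2::real) gchoose k) * (-t)^k) + (if k = 0 then 1 else 0)) sums (- sqrt (1 - t) + 1)"
    using sums_single[of 0 "\<lambda>_. 1::real"] by (intro sums_add sums_minus) simp_all
  moreover have "(\<lambda>k. - (((1/2::real) gchoose k) * (-t)^k) + (if k = 0 then 1 else 0))
      = (\<lambda>k. one_minus_sqrt_coeff k * t^k)"
    by (rule ext) (simp add: one_minus_sqrt_coeff_def power_mult_distrib[symmetric])
  ultimately show ?thesis by simp
qed

text \<open>Abel's theorem in its trivial direction: the partial sums are limits of
  \<open>\<Sum>\<^bsub>k<N\<^esub> c\<^sub>k t\<^sup>k \<le> 1 - sqrt (1 - t) \<le> 1\<close> as \<open>t \<rightarrow> 1\<^sup>-\<close>.\<close>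
lemma sum_one_minus_sqrt_coeff_le_1: "sum one_minus_sqrt_coeff {..<N} \<le> 1"
proof -
  let ?f = "\<lambda>t::real. \<Sum>k<N. one_minus_sqrt_coeff k * t^k"
  have "eventually (\<lambda>t. ?f t \<le> 1) (at_left (1::real))"
  proof (rule eventually_mono)
    show "eventually (\<lambda>t. t \<in> {0<..<1}) (at_left (1::real))"
      by (rule eventually_at_left_real) simp
  next
    fix t :: real assume t: "t \<in> {0<..<1}"
    have s: "(\<lambda>k. one_minus_sqrt_coeff k * t^k) sums (1 - sqrt (1 - t))"
      using one_minus_sqrt_coeff_sums[of t] t by auto
    have "?f t \<le> 1 - sqrt (1 - t)"
      using sum_le_suminf[OF sums_summable[OF s], of "{..<N}"] sums_unique[OF s] t
      by (auto simp: one_minus_sqrt_coeff_nonneg)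
    also have "\<dots> \<le> 1" using t by simp
    finally show "?f t \<le> 1" .
  qed
  moreover have "(?f \<longlongrightarrow> ?f 1) (at_left 1)"
    by (intro tendsto_intros)
  ultimately have "?f 1 \<le> 1"
    using tendsto_le[OF trivial_limit_at_left_real tendsto_const] by blast
  thus ?thesis by simp
qed

lemma summable_one_minus_sqrt_coeff: "summable one_minus_sqrt_coeff"
  by (rule summableI_nonneg_bounded[OF one_minus_sqrt_coeff_nonneg sum_one_minus_sqrt_coeff_le_1])

lemma suminf_one_minus_sqrt_coeff_le_1: "suminf one_minus_sqrt_coeff \<le> 1"
  using summable_one_minus_sqrt_coeff sum_one_minus_sqrt_coeff_le_1 by (simp add: suminf_le_const)

lemma inner_power_trinomial:
  fixes a b :: "real^3"
  shows "(a \<bullet> b)^m = (\<Sum>p\<le>m. \<Sum>q\<le>m-p. real (m choose p) * real ((m-p) choose q) *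
            ((a$1*b$1)^p * (a$2*b$2)^q * (a$3*b$3)^(m-p-q)))"
proof -
  have "a \<bullet> b = a$1*b$1 + (a$2*b$2 + a$3*b$3)" by (simp add: inner_vec_def sum_3)
  hence "(a \<bullet> b)^m = (\<Sum>p\<le>m. real (m choose p) * (a$1*b$1)^p *
      (\<Sum>q\<le>m-p. real ((m-p) choose q) * (a$2*b$2)^q * (a$3*b$3)^(m-p-q)))"
    by (simp add: binomial_ring)
  thus ?thesis
    by (simp add: sum_distrib_left mult_ac)
qed

lemma sum_mult_inner_power_expand:
  fixes x :: "nat \<Rightarrow> real" and v :: "nat \<Rightarrow> real^3" and n m :: nat
  defines "Y \<equiv> \<lambda>p q. \<Sum>i<n. x i * ((v i$1)^p * (v i$2)^q * (v i$3)^(m-p-q))"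
  shows "(\<Sum>i<n. x i * (v i \<bullet> w)^m) = (\<Sum>p\<le>m. \<Sum>q\<le>m-p. real (m choose p) * real ((m-p) choose q) *
            ((w$1)^p * (w$2)^q * (w$3)^(m-p-q)) * Y p q)"
proof -
  have "(\<Sum>i<n. x i * (v i \<bullet> w)^m) = (\<Sum>i<n. \<Sum>p\<le>m. \<Sum>q\<le>m-p. real (m choose p) * real ((m-p) choose q) *
            ((w$1)^p * (w$2)^q * (w$3)^(m-p-q)) * (x i * ((v i$1)^p * (v i$2)^q * (v i$3)^(m-p-q))))"
    by (simp add: inner_power_trinomial sum_distrib_left power_mult_distrib mult_ac)
  also have "\<dots> = (\<Sum>p\<le>m. \<Sum>q\<le>m-p. \<Sum>i<n. real (m choose p) * real ((m-p) choose q) *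
            ((w$1)^p * (w$2)^q * (w$3)^(m-p-q)) * (x i * ((v i$1)^p * (v i$2)^q * (v i$3)^(m-p-q))))"
    by (subst sum.swap) (intro sum.cong refl sum.swap)
  also have "\<dots> = (\<Sum>p\<le>m. \<Sum>q\<le>m-p. real (m choose p) * real ((m-p) choose q) *
            ((w$1)^p * (w$2)^q * (w$3)^(m-p-q)) * Y p q)"
    by (simp add: Y_def sum_distrib_left)
  finally show ?thesis .
qed

text \<open>The Schur powers of the Gram matrix of \<open>v\<^sub>0, \<dots>, v\<^sub>n\<^sub>-\<^sub>1\<close> are Gram matrices
  of the monomials of degree \<open>m\<close> in the coordinates of \<open>v\<^sub>i\<close>.\<close>
lemma inner_power_quadratic_form_eq:
  fixes x :: "nat \<Rightarrow> real" and v :: "nat \<Rightarrow> real^3" and n m :: nat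
  defines "Y \<equiv> \<lambda>p q. \<Sum>i<n. x i * ((v i$1)^p * (v i$2)^q * (v i$3)^(m-p-q))"
  shows "(\<Sum>j<n. x j * (\<Sum>i<n. x i * (v i \<bullet> v j)^m))
    = (\<Sum>p\<le>m. \<Sum>q\<le>m-p. real (m choose p) * real ((m-p) choose q) * (Y p q)^2)"
proof -
  have "(\<Sum>j<n. x j * (\<Sum>i<n. x i * (v i \<bullet> v j)^m))
      = (\<Sum>j<n. \<Sum>p\<le>m. \<Sum>q\<le>m-p. real (m choose p) * real ((m-p) choose q) * Y p q *
            (x j * ((v j$1)^p * (v j$2)^q * (v j$3)^(m-p-q))))"
    unfolding Y_def sum_mult_inner_power_expand by (simp add: sum_distrib_left mult_ac)
  also have "\<dots> = (\<Sum>p\<le>m. \<Sum>q\<le>m-p. \<Sum>j<n. real (m choose p) * real ((m-p) choose q) * Y p q *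
            (x j * ((v j$1)^p * (v j$2)^q * (v j$3)^(m-p-q))))"
    by (subst sum.swap) (intro sum.cong refl sum.swap)
  also have "\<dots> = (\<Sum>p\<le>m. \<Sum>q\<le>m-p. real (m choose p) * real ((m-p) choose q) * (Y p q)^2)"
    by (simp add: Y_def power2_eq_square sum_distrib_left mult_ac)
  finally show ?thesis .
qed

lemma inner_power_quadratic_form_nonneg:
  fixes x :: "nat \<Rightarrow> real" and v :: "nat \<Rightarrow> real^3"
  shows "(\<Sum>j<n. x j * (\<Sum>i<n. x i * (v i \<bullet> v j)^m)) \<ge> 0"
  unfolding inner_power_quadratic_form_eq by (intro sum_nonneg mult_nonneg_nonneg) auto

lemma inner_power_quadratic_form_eq_0:
  fixes x :: "nat \<Rightarrow> real" and v :: "nat \<Rightarrow> real^3"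
  assumes "(\<Sum>j<n. x j * (\<Sum>i<n. x i * (v i \<bullet> v j)^m)) = 0"
  shows "(\<Sum>i<n. x i * (v i \<bullet> w)^m) = 0"
proof -
  define Y where "Y = (\<lambda>p q. \<Sum>i<n. x i * ((v i$1)^p * (v i$2)^q * (v i$3)^(m-p-q)))"
  have "(\<Sum>p\<le>m. \<Sum>q\<le>m-p. real (m choose p) * real ((m-p) choose q) * (Y p q)^2) = 0"
    using assms unfolding inner_power_quadratic_form_eq Y_def .
  hence "\<forall>p\<in>{..m}. \<forall>q\<in>{..m-p}. real (m choose p) * real ((m-p) choose q) * (Y p q)^2 = 0"
    by (subst (asm) sum_nonneg_eq_0_iff) (auto simp: sum_nonneg_eq_0_iff intro!: sum_nonneg)
  hence "\<And>p q. p \<le> m \<Longrightarrow> q \<le> m - p \<Longrightarrow> Y p q = 0"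
    by auto
  thus ?thesis
    unfolding sum_mult_inner_power_expand by (intro sum.neutral ballI) (simp add: Y_def)
qed

lemma norm_cross3_unit:
  fixes a b :: "real^3"
  assumes "norm a = 1" "norm b = 1"
  shows "norm (cross3 a b) = sqrt (1 - (a \<bullet> b)^2)"
proof -
  have "(norm (cross3 a b))^2 = 1 - (a \<bullet> b)^2"
    using norm_cross_dot[of a b] assms by simp
  thus ?thesis by (metis real_sqrt_unique norm_ge_zero)
qed

lemma inner_square_unit_lt_1:
  fixes a b :: "real^3"
  assumes "norm a = 1" "norm b = 1" "cross3 a b \<noteq> 0"
  shows "(a \<bullet> b)^2 < 1"
proof -
  have "(norm (cross3 a b))^2 + (a \<bullet> b)^2 = 1"
    using norm_cross_dot[of a b] assms(1,2) by simp
  moreover have "(norm (cross3 a b))^2 > 0" using assms(3) by simp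
  ultimately show ?thesis by linarith
qed

lemma one_minus_sqrt_coeff_inner_sums:
  fixes a b :: "real^3"
  assumes "norm a = 1" "norm b = 1" "cross3 a b \<noteq> 0"
  shows "(\<lambda>k. one_minus_sqrt_coeff k * ((a \<bullet> b)^2)^k) sums (1 - norm (cross3 a b))"
  using one_minus_sqrt_coeff_sums[of "(a \<bullet> b)^2"] inner_square_unit_lt_1[OF assms]
    norm_cross3_unit[OF assms(1,2)] by simp

lemma sum_powers_eq_0_imp_coeff_eq_0:
  fixes t x :: "nat \<Rightarrow> real"
  assumes j: "j < n" and "t j = 1" and "\<And>i. i < n \<Longrightarrow> i \<noteq> j \<Longrightarrow> \<bar>t i\<bar> < 1"
    and "\<And>k. k \<ge> 1 \<Longrightarrow> (\<Sum>i<n. x i * t i ^ k) = 0"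
  shows "x j = 0"
proof -
  have "(\<lambda>k. \<Sum>i<n. x i * t i ^ k) \<longlonglongrightarrow> (\<Sum>i<n. x i * (if i = j then 1 else 0))"
  proof (intro tendsto_sum tendsto_mult_left)
    fix i assume "i \<in> {..<n}"
    thus "(\<lambda>k. t i ^ k) \<longlonglongrightarrow> (if i = j then 1 else 0)"
      using assms(2,3) LIMSEQ_power_zero[of "t i"] by auto
  qed
  moreover have "(\<lambda>k. \<Sum>i<n. x i * t i ^ Suc k) = (\<lambda>_. 0)"
    by (rule ext, rule assms(4)) simp
  hence "(\<lambda>k. \<Sum>i<n. x i * t i ^ Suc k) \<longlonglongrightarrow> 0"
    by simp
  hence "(\<lambda>k. \<Sum>i<n. x i * t i ^ k) \<longlonglongrightarrow> 0"
    by (rule LIMSEQ_imp_Suc)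
  ultimately show ?thesis
    using j LIMSEQ_unique by (fastforce simp: if_distrib sum.delta cong: if_cong)
qed

lemma cross_norm_quadratic_form_series:
  fixes v :: "nat \<Rightarrow> real^3" and x :: "nat \<Rightarrow> real"
  assumes unit: "\<And>i. i < n \<Longrightarrow> norm (v i) = 1"
    and nonpar: "\<And>i j. i < n \<Longrightarrow> j < n \<Longrightarrow> i \<noteq> j \<Longrightarrow> cross3 (v i) (v j) \<noteq> 0"
  shows "(\<lambda>k. one_minus_sqrt_coeff k * (\<Sum>i<n. \<Sum>j<n. x i * x j * ((v i \<bullet> v j)^2)^k)) sums
    ((\<Sum>i<n. x i)^2 - (\<Sum>i<n. \<Sum>j<n. x i * x j * norm (cross3 (v i) (v j)))
      - (1 - suminf one_minus_sqrt_coeff) * (\<Sum>i<n. (x i)^2))"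
proof -
  define c where "c = one_minus_sqrt_coeff"
  define C where "C = suminf c"
  define t where "t = (\<lambda>i j. (v i \<bullet> v j)^2)"
  have entry_sums: "(\<lambda>k. c k * t i j ^ k) sums (1 - norm (cross3 (v i) (v j)) - (if i = j then 1 - C else 0))"
    if "i < n" "j < n" for i j
  proof (cases "i = j")
    case True
    have "summable c" unfolding c_def by (rule summable_one_minus_sqrt_coeff)
    moreover have "t i i = 1"
      using unit[OF that(1)] by (simp add: t_def power2_norm_eq_inner[symmetric])
    ultimately show ?thesis using True by (simp add: C_def summable_sums)
  qed (use one_minus_sqrt_coeff_inner_sums unit nonpar that in \<open>simp add: c_def t_def\<close>)
  hence "(\<lambda>k. c k * (\<Sum>i<n. \<Sum>j<n. x i * x j * t i j ^ k)) sums (\<Sum>i<n. \<Sum>j<n. x i * x j *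
      (1 - norm (cross3 (v i) (v j)) - (if i = j then 1 - C else 0)))"
    unfolding sum_distrib_left
    by (intro sums_sum) (simp add: mult.left_commute[of "c _"] sums_mult)
  moreover have "x i * x j * (1 - s - (if i = j then 1 - C else 0))
      = x i * x j - x i * x j * s - (if i = j then (1 - C) * (x i)^2 else 0)" for i j s
    by (simp add: algebra_simps power2_eq_square)
  ultimately show ?thesis
    by (simp add: c_def C_def t_def sum_subtractf sum_distrib_left power2_eq_square
        sum_product[symmetric])
qed

text \<open>If the quadratic form vanished, so would all terms of the series above; then
  \<open>\<Sum>\<^sub>i x\<^sub>i (v\<^sub>i \<bullet> v\<^sub>j)\<^sup>2\<^sup>k = 0\<close> for all \<open>k \<ge> 1\<close>, which forces \<open>x = 0\<close>.\<close>
lemma cross_norm_quadratic_form_neg: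
  fixes v :: "nat \<Rightarrow> real^3" and x :: "nat \<Rightarrow> real"
  assumes unit: "\<And>i. i < n \<Longrightarrow> norm (v i) = 1"
    and nonpar: "\<And>i j. i < n \<Longrightarrow> j < n \<Longrightarrow> i \<noteq> j \<Longrightarrow> cross3 (v i) (v j) \<noteq> 0"
    and sum_x: "(\<Sum>i<n. x i) = 0" and x_nz: "\<exists>i<n. x i \<noteq> 0"
  shows "(\<Sum>i<n. \<Sum>j<n. x i * x j * norm (cross3 (v i) (v j))) < 0"
proof -
  define c where "c = one_minus_sqrt_coeff"
  define P where "P = (\<lambda>k. \<Sum>i<n. \<Sum>j<n. x i * x j * ((v i \<bullet> v j)^2)^k)"
  define L where "L = (\<Sum>i<n. \<Sum>j<n. x i * x j * norm (cross3 (v i) (v j)))"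
  define D where "D = (1 - suminf c) * (\<Sum>i<n. (x i)^2)"
  have series: "(\<lambda>k. c k * P k) sums (- L - D)"
    using cross_norm_quadratic_form_series[where n=n and v=v and x=x, OF unit nonpar] sum_x
    unfolding c_def P_def L_def D_def by simp
  have P_eq: "P k = (\<Sum>j<n. x j * (\<Sum>i<n. x i * (v i \<bullet> v j)^(2*k)))" for k
    unfolding P_def by (subst sum.swap) (simp add: sum_distrib_left power_mult[symmetric] mult_ac)
  have P_nonneg: "P k \<ge> 0" for k
    unfolding P_eq by (rule inner_power_quadratic_form_nonneg)
  have c_nonneg: "c k \<ge> 0" for k unfolding c_def by (rule one_minus_sqrt_coeff_nonneg)
  have series_nonneg: "suminf (\<lambda>k. c k * P k) \<ge> 0"
    by (rule suminf_nonneg[OF sums_summable[OF series]]) (simp add: P_nonneg c_nonneg)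
  have D_nonneg: "D \<ge> 0"
    using suminf_one_minus_sqrt_coeff_le_1 unfolding D_def c_def
    by (auto intro!: mult_nonneg_nonneg[of "1 - _"] sum_nonneg)
  have "L \<noteq> 0"
  proof
    assume "L = 0"
    hence "suminf (\<lambda>k. c k * P k) = 0"
      using sums_unique[OF series] series_nonneg D_nonneg by linarith
    hence cP_0: "c k * P k = 0" for k
      using suminf_eq_zero_iff[OF sums_summable[OF series]] P_nonneg c_nonneg by simp
    have "x j = 0" if j: "j < n" for j
    proof (rule sum_powers_eq_0_imp_coeff_eq_0[of j n "\<lambda>i. (v i \<bullet> v j)^2"])
      show "(v j \<bullet> v j)^2 = 1"
        using unit[OF j] by (simp add: power2_norm_eq_inner[symmetric])
      show "\<bar>(v i \<bullet> v j)^2\<bar> < 1" if "i < n" "i \<noteq> j" for i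
        using inner_square_unit_lt_1 unit nonpar that j by simp
      show "(\<Sum>i<n. x i * ((v i \<bullet> v j)^2) ^ k) = 0" if "k \<ge> 1" for k
        using inner_power_quadratic_form_eq_0[where m="2*k" and w="v j"] P_eq[of k] cP_0[of k]
          one_minus_sqrt_coeff_pos[OF that] by (simp add: c_def power_mult)
    qed (rule j)
    then show False using x_nz by auto
  qed
  thus ?thesis
    using sums_unique[OF series] series_nonneg D_nonneg unfolding L_def by linarith
qed

lemma index_mult_mat_sum:
  assumes "A \<in> carrier_mat n m" "B \<in> carrier_mat m p" "i < n" "j < p"
  shows "(A * B) $$ (i,j) = (\<Sum>k<m. A $$ (i,k) * B $$ (k,j))"
  using assms by (simp add: scalar_prod_def Matrix.row_def col_def atLeast0LessThan)

lemma symmetric_bilinear_commute: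
  fixes S :: "real Matrix.mat"
  assumes sym: "\<And>i j. i < n \<Longrightarrow> j < n \<Longrightarrow> S $$ (i,j) = S $$ (j,i)"
  shows "(\<Sum>l<n. u l * (\<Sum>m<n. S $$ (l,m) * w m)) = (\<Sum>m<n. w m * (\<Sum>l<n. S $$ (m,l) * u l))"
proof -
  have "(\<Sum>l<n. u l * (\<Sum>m<n. S $$ (l,m) * w m)) = (\<Sum>l<n. \<Sum>m<n. w m * (S $$ (m,l) * u l))"
    by (intro sum.cong refl) (simp add: sum_distrib_left sym mult_ac)
  also have "\<dots> = (\<Sum>m<n. w m * (\<Sum>l<n. S $$ (m,l) * u l))"
    by (subst sum.swap) (simp add: sum_distrib_left)
  finally show ?thesis .
qed

interpretation of_real_poly_hom: map_poly_inj_comm_ring_hom "of_real :: real \<Rightarrow> complex" ..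

lemma real_symmetric_complex_eigenvalue_real:
  fixes S :: "real Matrix.mat" and a :: complex
  assumes S: "S \<in> carrier_mat n n"
    and sym: "\<And>i j. i < n \<Longrightarrow> j < n \<Longrightarrow> S $$ (i,j) = S $$ (j,i)"
    and ev: "eigenvalue (of_real_hom.mat_hom S) a"
  shows "a \<in> \<real>"
proof -
  let ?Sc = "of_real_hom.mat_hom S :: complex Matrix.mat"
  define M where "M = (\<lambda>i j. complex_of_real (S $$ (i,j)))"
  from ev obtain v where v: "v \<in> carrier_vec n" "v \<noteq> 0\<^sub>v n" "?Sc *\<^sub>v v = a \<cdot>\<^sub>v v"
    unfolding eigenvalue_def eigenvector_def using S by auto
  have Mv: "(\<Sum>j<n. M i j * v$j) = a * v$i" if i: "i < n" for i
  proof -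
    have "(?Sc *\<^sub>v v) $ i = (\<Sum>j<n. M i j * v$j)"
      using S v(1) i by (simp add: scalar_prod_def M_def atLeast0LessThan Matrix.row_def)
    thus ?thesis using v(3) v(1) i by simp
  qed
  obtain i0 where i0: "i0 < n" "v $ i0 \<noteq> 0"
    using v(1,2) by (metis carrier_vecD eq_vecI index_zero_vec(1) index_zero_vec(2))
  text \<open>\<open>v\<^sup>* S v = a \<parallel>v\<parallel>\<^sup>2\<close> is self-conjugate because \<open>S\<close> is real symmetric.\<close>
  define s where "s = (\<Sum>i<n. cnj (v$i) * (\<Sum>j<n. M i j * v$j))"
  define N where "N = (\<Sum>i<n. (cmod (v$i))^2)"
  have "N \<ge> (cmod (v$i0))^2" unfolding N_def
    by (rule member_le_sum) (use i0 in auto)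
  moreover have "(cmod (v$i0))^2 > 0" using i0 by simp
  ultimately have N_pos: "N > 0" by linarith
  have "s = (\<Sum>i<n. a * (cnj (v$i) * v$i))"
    unfolding s_def by (intro sum.cong refl) (simp add: Mv)
  also have "\<dots> = a * of_real N"
    unfolding N_def by (simp add: sum_distrib_left complex_norm_square mult_ac del: of_real_power)
  finally have s_eq: "s = a * of_real N" .
  have "cnj s = (\<Sum>j<n. \<Sum>i<n. cnj (v$j) * (M j i * v$i))"
    unfolding s_def by (subst sum.swap) (simp add: sum_distrib_left M_def sym mult_ac)
  hence "cnj s = s" by (simp add: s_def sum_distrib_left)
  hence "cnj a = a" using s_eq N_pos by (metis complex_cnj_complex_of_real complex_cnj_mult
        mult_cancel_right of_real_eq_0_iff less_irrefl)
  thus ?thesis by (metis Reals_cnj_iff)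
qed

lemma real_symmetric_char_poly_splits:
  fixes S :: "real Matrix.mat"
  assumes S: "S \<in> carrier_mat n n"
    and sym: "\<And>i j. i < n \<Longrightarrow> j < n \<Longrightarrow> S $$ (i,j) = S $$ (j,i)"
  obtains es where "char_poly S = (\<Prod>e\<leftarrow>es. [:- e, 1:])"
proof -
  let ?Sc = "of_real_hom.mat_hom S :: complex Matrix.mat"
  have Sc: "?Sc \<in> carrier_mat n n" using S by simp
  obtain as where as: "char_poly ?Sc = (\<Prod>a\<leftarrow>as. [:- a, 1:])"
    using char_poly_factorized[OF Sc] by auto
  have "a \<in> \<real>" if "a \<in> set as" for a
  proof (rule real_symmetric_complex_eigenvalue_real[OF S sym])
    show "eigenvalue ?Sc a" unfolding eigenvalue_root_char_poly[OF Sc] as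
      using that by (rule linear_poly_root)
  qed
  hence as_real: "as = map of_real (map Re as)"
    by (induct as) (auto simp: complex_is_Real_iff complex_eq_iff)
  have map_lin_prod: "map_poly of_real (\<Prod>e\<leftarrow>es. [:- e, 1:]) = (\<Prod>e\<leftarrow>es. [:- complex_of_real e, 1:])"
    for es :: "real list"
    by (simp add: of_real_poly_hom.hom_prod_list o_def map_poly_pCons)
  have "map_poly of_real (char_poly S) = char_poly ?Sc"
    by (rule of_real_hom.char_poly_hom[OF S, symmetric])
  also have "\<dots> = (\<Prod>e\<leftarrow>map Re as. [:- complex_of_real e, 1:])"
    by (subst as, subst (1) as_real) (simp add: o_def)
  also have "\<dots> = map_poly of_real (\<Prod>e\<leftarrow>map Re as. [:- e, 1:])"
    by (rule map_lin_prod[symmetric])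
  finally have "char_poly S = (\<Prod>e\<leftarrow>map Re as. [:- e, 1:])" by simp
  thus thesis by (rule that)
qed

lemma jordan_matrix_off_band_eq_0:
  fixes n_as :: "(nat \<times> 'a::{zero,one}) list"
  shows "i < sum_list (map fst n_as) \<Longrightarrow> j < sum_list (map fst n_as) \<Longrightarrow> i \<noteq> j \<Longrightarrow> Suc i \<noteq> j
    \<Longrightarrow> jordan_matrix n_as $$ (i,j) = 0"
proof (induct n_as arbitrary: i j)
  case (Cons ma rest)
  obtain m a where ma: "ma = (m,a)" by force
  show ?case using Cons.prems Cons.hyps[of "i - m" "j - m"] unfolding ma jordan_matrix_Cons
    by (auto simp: Suc_diff_le)
qed simp

lemma jordan_matrix_superdiag_neq_0:
  fixes n_as :: "(nat \<times> 'a::{zero,one}) list"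
  shows "Suc i < sum_list (map fst n_as) \<Longrightarrow> jordan_matrix n_as $$ (i, Suc i) \<noteq> 0
    \<Longrightarrow> jordan_matrix n_as $$ (i, Suc i) = 1 \<and> jordan_matrix n_as $$ (i,i) = jordan_matrix n_as $$ (Suc i, Suc i)"
proof (induct n_as arbitrary: i)
  case (Cons ma rest)
  obtain m a where ma: "ma = (m,a)" by force
  show ?case using Cons.prems Cons.hyps[of "i - m"] unfolding ma jordan_matrix_Cons
    by (auto simp: Suc_diff_le)
qed simp

text \<open>Pairing the chain equation for \<open>w\<close> with \<open>u\<close> gives \<open>\<parallel>u\<parallel>\<^sup>2 = 0\<close>.\<close>
lemma symmetric_jordan_chain_eq_0:
  fixes S :: "real Matrix.mat"
  assumes sym: "\<And>i j. i < n \<Longrightarrow> j < n \<Longrightarrow> S $$ (i,j) = S $$ (j,i)"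
    and Su: "\<And>l. l < n \<Longrightarrow> (\<Sum>m<n. S $$ (l,m) * u m) = d * u l"
    and Sw: "\<And>l. l < n \<Longrightarrow> (\<Sum>m<n. S $$ (l,m) * w m) = d * w l + u l"
    and l: "l < n"
  shows "u l = 0"
proof -
  have "(\<Sum>l<n. u l * (\<Sum>m<n. S $$ (l,m) * w m)) = (\<Sum>l<n. d * (u l * w l) + u l * u l)"
    by (intro sum.cong refl) (simp add: Sw ring_distribs)
  moreover have "(\<Sum>m<n. w m * (\<Sum>l<n. S $$ (m,l) * u l)) = (\<Sum>l<n. d * (u l * w l))"
    by (intro sum.cong refl) (use Su in \<open>simp add: mult_ac\<close>)
  ultimately have "(\<Sum>l<n. u l * u l) = 0"
    using symmetric_bilinear_commute[OF sym, where u=u and w=w] by (simp add: sum.distrib)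
  thus ?thesis using l by (subst (asm) sum_nonneg_eq_0_iff) auto
qed

lemma similar_mat_wit_mult_right_eq:
  assumes wit: "similar_mat_wit A B P Q" and A: "A \<in> carrier_mat n n"
  shows "A * P = P * B"
proof -
  note D = similar_mat_witD2[OF A wit]
  have "A * P = P * B * (Q * P)"
    using D by (simp add: assoc_mult_mat[of _ n n _ n _ n])
  thus ?thesis using D by simp
qed

lemma similar_mat_wit_mult_right_eq_sum:
  assumes wit: "similar_mat_wit A B P Q" and A: "A \<in> carrier_mat n n" and "l < n" "k < n"
  shows "(\<Sum>m<n. A $$ (l,m) * P $$ (m,k)) = (\<Sum>m<n. P $$ (l,m) * B $$ (m,k))"
proof -
  note D = similar_mat_witD2[OF A wit]
  have "(A * P) $$ (l,k) = (P * B) $$ (l,k)" using similar_mat_wit_mult_right_eq[OF wit A] by simp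
  thus ?thesis
    unfolding index_mult_mat_sum[OF A D(6) assms(3,4)] index_mult_mat_sum[OF D(6) D(5) assms(3,4)] .
qed

lemma similar_mat_wit_left_inverse_sum:
  assumes wit: "similar_mat_wit A B P Q" and A: "A \<in> carrier_mat n n" and "i < n" "k < n"
  shows "(\<Sum>m<n. Q $$ (i,m) * P $$ (m,k)) = (if i = k then 1 else 0)"
proof -
  note D = similar_mat_witD2[OF A wit]
  show ?thesis
    using D(2) assms(3,4) unfolding index_mult_mat_sum[OF D(7) D(6) assms(3,4), symmetric] by simp
qed

lemma sum_mult_two_point_support:
  fixes p c :: "nat \<Rightarrow> 'a::comm_semiring_1"
  assumes "k < n" "k' < n" "k \<noteq> k'"
    and "\<And>m. m < n \<Longrightarrow> c m = (if m = k then a else if m = k' then b else 0)"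
  shows "(\<Sum>m<n. p m * c m) = a * p k + b * p k'"
proof -
  have "(\<Sum>m<n. p m * c m) = (\<Sum>m<n. (if m = k then a * p m else 0) + (if m = k' then b * p m else 0))"
    using assms(3,4) by (intro sum.cong refl) (auto simp: mult.commute)
  thus ?thesis using assms(1,2) by (simp add: sum.distrib)
qed

lemma symmetric_similar_jordan_matrix_superdiag_eq_0:
  fixes S :: "real Matrix.mat"
  assumes S: "S \<in> carrier_mat n n"
    and sym: "\<And>i j. i < n \<Longrightarrow> j < n \<Longrightarrow> S $$ (i,j) = S $$ (j,i)"
    and wit: "similar_mat_wit S J P Q"
    and J: "J = jordan_matrix n_as"
  shows "Suc k < n \<Longrightarrow> J $$ (k, Suc k) = 0"
proof (induction k rule: less_induct)
  case (less k)
  have "J \<in> carrier_mat n n" using similar_mat_witD2[OF S wit] by simp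
  hence dim_J: "sum_list (map fst n_as) = n"
    unfolding J by (metis carrier_matD(1) jordan_matrix_dim(1))
  have off_band: "J $$ (i,j) = 0" if "i < n" "j < n" "i \<noteq> j" "Suc i \<noteq> j" for i j
    using jordan_matrix_off_band_eq_0[of i n_as j] that dim_J unfolding J by simp
  show ?case
  proof (rule ccontr)
    assume "J $$ (k, Suc k) \<noteq> 0"
    then obtain d where d: "J $$ (k, Suc k) = 1" "J $$ (k,k) = d" "J $$ (Suc k, Suc k) = d"
      using jordan_matrix_superdiag_neq_0[of k n_as] less.prems dim_J unfolding J by auto
    text \<open>By induction \<open>J\<^sub>k\<^sub>-\<^sub>1\<^sub>,\<^sub>k = 0\<close>, so columns \<open>k\<close> and \<open>k + 1\<close> of
      \<open>P\<close> form a Jordan chain of \<open>S\<close>.\<close>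
    have col_k: "J $$ (m,k) = (if m = k then d else if m = Suc k then 0 else 0)" if "m < n" for m
      using off_band[OF that, of k] less.IH[of m] less.prems d(2) that by (cases "Suc m = k") auto
    have col_Suc_k: "J $$ (m, Suc k) = (if m = Suc k then d else if m = k then 1 else 0)" if "m < n" for m
      using off_band[OF that less.prems] d by auto
    have "P $$ (l,k) = 0" if "l < n" for l
    proof (rule symmetric_jordan_chain_eq_0[OF sym _ _ that])
      show "(\<Sum>m<n. S $$ (l,m) * P $$ (m,k)) = d * P $$ (l,k)" if "l < n" for l
        using similar_mat_wit_mult_right_eq_sum[OF wit S that, of k] less.prems
          sum_mult_two_point_support[of k n "Suc k" "\<lambda>m. J $$ (m,k)", OF _ _ _ col_k] by simp
      show "(\<Sum>m<n. S $$ (l,m) * P $$ (m, Suc k)) = d * P $$ (l, Suc k) + P $$ (l,k)" if "l < n" for l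
        using similar_mat_wit_mult_right_eq_sum[OF wit S that less.prems]
          sum_mult_two_point_support[of "Suc k" n k "\<lambda>m. J $$ (m, Suc k)", OF _ _ _ col_Suc_k]
          less.prems by simp
    qed
    hence "(\<Sum>m<n. Q $$ (k,m) * P $$ (m,k)) = 0" by simp
    thus False using similar_mat_wit_left_inverse_sum[OF wit S, of k k] less.prems by simp
  qed
qed

lemma real_symmetric_similar_mat_diag:
  fixes S :: "real Matrix.mat"
  assumes S: "S \<in> carrier_mat n n"
    and sym: "\<And>i j. i < n \<Longrightarrow> j < n \<Longrightarrow> S $$ (i,j) = S $$ (j,i)"
  obtains P Q d where "similar_mat_wit S (mat_diag n d) P Q"
proof -
  obtain es where "char_poly S = (\<Prod>e\<leftarrow>es. [:- e, 1:])"
    by (rule real_symmetric_char_poly_splits[OF S sym])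
  then obtain n_as where "jordan_nf S n_as" using jordan_nf_exists[OF S] by blast
  define J where "J = jordan_matrix n_as"
  obtain P Q where wit: "similar_mat_wit S J P Q"
    using \<open>jordan_nf S n_as\<close> unfolding jordan_nf_def similar_mat_def J_def by blast
  have J: "J \<in> carrier_mat n n" using similar_mat_witD2[OF S wit] by simp
  hence "sum_list (map fst n_as) = n"
    unfolding J_def by (metis carrier_matD(1) jordan_matrix_dim(1))
  hence "J $$ (i,j) = 0" if "i < n" "j < n" "i \<noteq> j" for i j
    using jordan_matrix_off_band_eq_0[of i n_as j] that
      symmetric_similar_jordan_matrix_superdiag_eq_0[OF S sym wit J_def, of i]
    unfolding J_def by (cases "Suc i = j") auto
  hence "J = mat_diag n (\<lambda>i. J $$ (i,i))"
    using J by (intro eq_matI) (auto simp: mat_diag_def)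
  thus thesis using wit that by metis
qed

lemma upper_triangular_mat_diag: "upper_triangular (mat_diag n d)"
  by (auto simp: upper_triangular_def mat_diag_def)

lemma diag_mat_mat_diag: "diag_mat (mat_diag n d) = map d [0..<n]"
  by (simp add: diag_mat_def mat_diag_def)

lemma char_poly_mat_diag: "char_poly (mat_diag n d) = (\<Prod>e\<leftarrow>map d [0..<n]. [:- e, 1:])"
  using char_poly_upper_triangular[OF mat_diag_dim upper_triangular_mat_diag]
  unfolding diag_mat_mat_diag .

lemma det_mat_diag: "Determinant.det (mat_diag n d) = prod_list (map d [0..<n])"
  using det_upper_triangular[OF upper_triangular_mat_diag mat_diag_dim]
  unfolding diag_mat_mat_diag .

lemma count_list_filter: "count_list (filter P xs) a = (if P a then count_list xs a else 0)"
  by (induct xs) auto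

lemma order_prod_linear: "order a (\<Prod>e\<leftarrow>es. [:- e, 1:]) = count_list es a"
  by (subst order_prod_list) (auto simp: order_linear' o_def, induct es, auto)

lemma eigen_count_prod_linear:
  assumes S: "S \<in> carrier_mat n n" and cp: "char_poly S = (\<Prod>e\<leftarrow>es. [:- e, 1:])"
  shows "eigen_count S P = length (filter P es)"
proof -
  have "eigenvalue S a \<longleftrightarrow> a \<in> set es" for a
    unfolding eigenvalue_root_char_poly[OF S] cp poly_prod_list_zero_iff by auto
  hence "{a. P a \<and> eigenvalue S a} = set (filter P es)" by auto
  hence "eigen_count S P = (\<Sum>a\<in>set (filter P es). count_list es a)"
    unfolding eigen_count_def cp order_prod_linear by simp
  also have "\<dots> = (\<Sum>a\<in>set (filter P es). count_list (filter P es) a)"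
    by (intro sum.cong refl) (auto simp: count_list_filter)
  also have "\<dots> = length (filter P es)" by (rule sum_count_set) auto
  finally show ?thesis .
qed

lemma eigen_count_similar_mat_diag:
  assumes wit: "similar_mat_wit S (mat_diag n d) P Q" and S: "S \<in> carrier_mat n n"
  shows "eigen_count S R = card {i. i < n \<and> R (d i)}"
proof -
  have cp: "char_poly S = (\<Prod>e\<leftarrow>map d [0..<n]. [:- e, 1:])"
    using char_poly_similar[of S "mat_diag n d"] wit char_poly_mat_diag
    unfolding similar_mat_def by metis
  show ?thesis
    unfolding eigen_count_prod_linear[OF S cp] length_filter_conv_card
    by (intro arg_cong[where f=card]) auto
qed

lemma index_mult_mat_diag_right:
  assumes "A \<in> carrier_mat m n" "i < m" "k < n"
  shows "(A * mat_diag n d) $$ (i,k) = A $$ (i,k) * d k"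
  using assms by (simp add: mat_diag_mult_right)

lemma trace_similar_mat_diag:
  fixes S :: "'a::comm_ring_1 Matrix.mat"
  assumes wit: "similar_mat_wit S (mat_diag n d) P Q" and S: "S \<in> carrier_mat n n"
  shows "(\<Sum>i<n. S $$ (i,i)) = (\<Sum>i<n. d i)"
proof -
  note D = similar_mat_witD2[OF S wit]
  have PD: "P * mat_diag n d \<in> carrier_mat n n" using D by simp
  have "S $$ (i,i) = (\<Sum>k<n. d k * (Q $$ (k,i) * P $$ (i,k)))" if "i < n" for i
  proof -
    have "S $$ (i,i) = (\<Sum>k<n. (P * mat_diag n d) $$ (i,k) * Q $$ (k,i))"
      by (subst D(3)) (rule index_mult_mat_sum[OF PD D(7) that that])
    thus ?thesis using that by (simp add: index_mult_mat_diag_right[OF D(6)] mult_ac)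
  qed
  hence "(\<Sum>i<n. S $$ (i,i)) = (\<Sum>i<n. \<Sum>k<n. d k * (Q $$ (k,i) * P $$ (i,k)))"
    by simp
  also have "\<dots> = (\<Sum>k<n. d k * (\<Sum>i<n. Q $$ (k,i) * P $$ (i,k)))"
    by (subst sum.swap) (simp add: sum_distrib_left)
  also have "\<dots> = (\<Sum>k<n. d k)"
    using similar_mat_wit_left_inverse_sum[OF wit S] by simp
  finally show ?thesis .
qed

lemma similar_mat_diag_eigenvector:
  fixes S :: "'a::comm_semiring_1 Matrix.mat"
  assumes wit: "similar_mat_wit S (mat_diag n d) P Q" and S: "S \<in> carrier_mat n n"
    and "l < n" "k < n"
  shows "(\<Sum>m<n. S $$ (l,m) * P $$ (m,k)) = d k * P $$ (l,k)"
proof -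
  note D = similar_mat_witD2[OF S wit]
  have "(\<Sum>m<n. S $$ (l,m) * P $$ (m,k)) = (S * P) $$ (l,k)"
    by (rule index_mult_mat_sum[OF S D(6) assms(3,4), symmetric])
  also have "\<dots> = (P * mat_diag n d) $$ (l,k)"
    using similar_mat_wit_mult_right_eq[OF wit S] by simp
  also have "\<dots> = d k * P $$ (l,k)"
    using index_mult_mat_diag_right[OF D(6) assms(3,4)] by (simp add: mult.commute)
  finally show ?thesis .
qed

lemma symmetric_eigenvectors_orthogonal:
  fixes S :: "real Matrix.mat"
  assumes sym: "\<And>i j. i < n \<Longrightarrow> j < n \<Longrightarrow> S $$ (i,j) = S $$ (j,i)"
    and Su: "\<And>l. l < n \<Longrightarrow> (\<Sum>m<n. S $$ (l,m) * u m) = a * u l"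
    and Sw: "\<And>l. l < n \<Longrightarrow> (\<Sum>m<n. S $$ (l,m) * w m) = b * w l"
    and "a \<noteq> b"
  shows "(\<Sum>l<n. u l * w l) = 0"
proof -
  have "(\<Sum>l<n. u l * (\<Sum>m<n. S $$ (l,m) * w m)) = (\<Sum>l<n. b * (u l * w l))"
    by (intro sum.cong refl) (simp add: Sw)
  moreover have "(\<Sum>m<n. w m * (\<Sum>l<n. S $$ (m,l) * u l)) = (\<Sum>l<n. a * (u l * w l))"
    by (intro sum.cong refl) (simp add: Su)
  ultimately have "b * (\<Sum>l<n. u l * w l) = a * (\<Sum>l<n. u l * w l)"
    using symmetric_bilinear_commute[OF sym, where u=u and w=w] by (simp add: sum_distrib_left)
  thus ?thesis using \<open>a \<noteq> b\<close> by simp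
qed
lemma symmetric_nonneg_eigenvectors_span_nonneg:
  fixes S :: "real Matrix.mat" and \<alpha> \<beta> :: real
  assumes sym: "\<And>i j. i < n \<Longrightarrow> j < n \<Longrightarrow> S $$ (i,j) = S $$ (j,i)"
    and Su: "\<And>l. l < n \<Longrightarrow> (\<Sum>m<n. S $$ (l,m) * u m) = a * u l"
    and Sw: "\<And>l. l < n \<Longrightarrow> (\<Sum>m<n. S $$ (l,m) * w m) = b * w l"
    and a: "a \<ge> 0" and b: "b \<ge> 0"
  defines "y \<equiv> \<lambda>l. \<alpha> * u l + \<beta> * w l"
  shows "(\<Sum>i<n. \<Sum>j<n. y i * y j * S $$ (i,j)) \<ge> 0"
proof -
  have Sy: "(\<Sum>m<n. S $$ (l,m) * y m) = \<alpha> * a * u l + \<beta> * b * w l" if "l < n" for l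
  proof -
    have "(\<Sum>m<n. S $$ (l,m) * y m)
        = \<alpha> * (\<Sum>m<n. S $$ (l,m) * u m) + \<beta> * (\<Sum>m<n. S $$ (l,m) * w m)"
      unfolding y_def by (simp add: ring_distribs sum.distrib sum_distrib_left mult_ac)
    thus ?thesis using Su[OF that] Sw[OF that] by simp
  qed
  have "(\<Sum>i<n. \<Sum>j<n. y i * y j * S $$ (i,j)) = (\<Sum>l<n. y l * (\<Sum>m<n. S $$ (l,m) * y m))"
    by (simp add: sum_distrib_left mult_ac)
  also have "\<dots> = (\<Sum>l<n. y l * (\<alpha> * a * u l + \<beta> * b * w l))"
    by (simp add: Sy)
  finally have form: "(\<Sum>i<n. \<Sum>j<n. y i * y j * S $$ (i,j))
      = \<alpha> * \<alpha> * a * (\<Sum>l<n. u l * u l) + \<beta> * \<beta> * b * (\<Sum>l<n. w l * w l)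
        + \<alpha> * \<beta> * (a + b) * (\<Sum>l<n. u l * w l)"
    unfolding y_def by (simp add: algebra_simps sum.distrib sum_distrib_left)
  show ?thesis
  proof (cases "a = b")
    case True
    have "a * (\<Sum>l<n. y l * y l) \<ge> 0" using a by (simp add: sum_nonneg)
    thus ?thesis
      unfolding form True unfolding y_def by (simp add: algebra_simps sum.distrib sum_distrib_left)
  next
    case False
    have "(\<Sum>l<n. u l * w l) = 0"
      using symmetric_eigenvectors_orthogonal[OF sym Su Sw False] by simp
    thus ?thesis
      unfolding form using a b by (simp add: sum_nonneg)
  qed
qed

lemma conditionally_negative_nonneg_eigenvectors_dependent:
  fixes S :: "real Matrix.mat"
  assumes sym: "\<And>i j. i < n \<Longrightarrow> j < n \<Longrightarrow> S $$ (i,j) = S $$ (j,i)"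
    and neg: "\<And>x. (\<Sum>i<n. x i) = 0 \<Longrightarrow> (\<exists>i<n. x i \<noteq> 0) \<Longrightarrow>
      (\<Sum>i<n. \<Sum>j<n. x i * x j * S $$ (i,j)) < 0"
    and Su: "\<And>l. l < n \<Longrightarrow> (\<Sum>m<n. S $$ (l,m) * u m) = a * u l"
    and Sw: "\<And>l. l < n \<Longrightarrow> (\<Sum>m<n. S $$ (l,m) * w m) = b * w l"
    and a: "a \<ge> 0" and b: "b \<ge> 0"
  obtains \<alpha> \<beta> where "\<alpha> \<noteq> 0 \<or> \<beta> \<noteq> 0" "\<And>l. l < n \<Longrightarrow> \<alpha> * u l + \<beta> * w l = 0"
proof -
  text \<open>A non-trivial combination of \<open>u\<close> and \<open>w\<close> whose entries sum to \<open>0\<close>.\<close>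
  define su where "su = (\<Sum>l<n. u l)"
  define sw where "sw = (\<Sum>l<n. w l)"
  define \<alpha> where "\<alpha> = (if su = 0 \<and> sw = 0 then 1 else sw)"
  define \<beta> where "\<beta> = (if su = 0 \<and> sw = 0 then 0 else - su)"
  define y where "y = (\<lambda>l. \<alpha> * u l + \<beta> * w l)"
  have "(\<Sum>l<n. y l) = 0"
    unfolding y_def by (simp add: sum.distrib flip: sum_distrib_left su_def sw_def)
      (simp add: \<alpha>_def \<beta>_def)
  moreover have "(\<Sum>i<n. \<Sum>j<n. y i * y j * S $$ (i,j)) \<ge> 0"
    unfolding y_def by (rule symmetric_nonneg_eigenvectors_span_nonneg[OF sym Su Sw a b])
  ultimately have "y l = 0" if "l < n" for l
    using neg[of y] that by fastforce
  moreover have "\<alpha> \<noteq> 0 \<or> \<beta> \<noteq> 0" unfolding \<alpha>_def \<beta>_def by auto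
  ultimately show thesis using that unfolding y_def by blast
qed

lemma similar_mat_wit_cols_independent:
  fixes A :: "'a::comm_ring_1 Matrix.mat"
  assumes wit: "similar_mat_wit A B P Q" and A: "A \<in> carrier_mat n n"
    and ij: "i < n" "j < n" "i \<noteq> j"
    and comb: "\<And>l. l < n \<Longrightarrow> \<alpha> * P $$ (l,i) + \<beta> * P $$ (l,j) = 0"
  shows "\<alpha> = 0 \<and> \<beta> = 0"
proof -
  have "\<alpha> * (\<Sum>l<n. Q $$ (k,l) * P $$ (l,i)) + \<beta> * (\<Sum>l<n. Q $$ (k,l) * P $$ (l,j)) = 0" for k
  proof -
    have "\<alpha> * (\<Sum>l<n. Q $$ (k,l) * P $$ (l,i)) + \<beta> * (\<Sum>l<n. Q $$ (k,l) * P $$ (l,j))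
        = (\<Sum>l<n. Q $$ (k,l) * (\<alpha> * P $$ (l,i) + \<beta> * P $$ (l,j)))"
      by (simp add: ring_distribs sum.distrib sum_distrib_left mult_ac)
    also have "\<dots> = 0" using comb by simp
    finally show ?thesis .
  qed
  from this[of i] this[of j] show ?thesis
    using similar_mat_wit_left_inverse_sum[OF wit A] ij by simp
qed

lemma conditionally_negative_similar_mat_diag_nonneg_unique:
  fixes S :: "real Matrix.mat"
  assumes S: "S \<in> carrier_mat n n"
    and sym: "\<And>i j. i < n \<Longrightarrow> j < n \<Longrightarrow> S $$ (i,j) = S $$ (j,i)"
    and neg: "\<And>x. (\<Sum>i<n. x i) = 0 \<Longrightarrow> (\<exists>i<n. x i \<noteq> 0) \<Longrightarrow>
      (\<Sum>i<n. \<Sum>j<n. x i * x j * S $$ (i,j)) < 0"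
    and wit: "similar_mat_wit S (mat_diag n d) P Q"
    and ij: "i < n" "j < n" "d i \<ge> 0" "d j \<ge> 0"
  shows "i = j"
proof (rule ccontr)
  assume "i \<noteq> j"
  obtain \<alpha> \<beta> where "\<alpha> \<noteq> 0 \<or> \<beta> \<noteq> 0" "\<And>l. l < n \<Longrightarrow> \<alpha> * P $$ (l,i) + \<beta> * P $$ (l,j) = 0"
    using conditionally_negative_nonneg_eigenvectors_dependent[OF sym neg
        similar_mat_diag_eigenvector[OF wit S _ ij(1)] similar_mat_diag_eigenvector[OF wit S _ ij(2)] ij(3,4)]
    by blast
  thus False using similar_mat_wit_cols_independent[OF wit S ij(1,2) \<open>i \<noteq> j\<close>] by blast
qed

theorem conditionally_negative_definite_signature:
  fixes S :: "real Matrix.mat"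
  assumes S: "S \<in> carrier_mat n n" and n: "n \<ge> 2"
    and sym: "\<And>i j. i < n \<Longrightarrow> j < n \<Longrightarrow> S $$ (i,j) = S $$ (j,i)"
    and diag: "\<And>i. i < n \<Longrightarrow> S $$ (i,i) = 0"
    and neg: "\<And>x. (\<Sum>i<n. x i) = 0 \<Longrightarrow> (\<exists>i<n. x i \<noteq> 0) \<Longrightarrow>
      (\<Sum>i<n. \<Sum>j<n. x i * x j * S $$ (i,j)) < 0"
  shows "Determinant.det S \<noteq> 0 \<and> eigen_count S (\<lambda>a. a > 0) = 1
    \<and> eigen_count S (\<lambda>a. a < 0) = n - 1"
proof -
  obtain P Q d where wit: "similar_mat_wit S (mat_diag n d) P Q"
    by (rule real_symmetric_similar_mat_diag[OF S sym])
  have unique_nonneg: "i = j" if "i < n" "j < n" "d i \<ge> 0" "d j \<ge> 0" for i j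
    by (rule conditionally_negative_similar_mat_diag_nonneg_unique[OF S sym neg wit that])
  have trace: "(\<Sum>i<n. d i) = 0"
    using trace_similar_mat_diag[OF wit S] diag by simp
  have "\<exists>i<n. d i > 0"
  proof (rule ccontr)
    assume "\<not> ?thesis"
    hence "d i \<le> 0" if "i < n" for i using that by (meson leI)
    hence "\<forall>i\<in>{..<n}. - d i = 0"
      by (intro sum_nonneg_eq_0_iff[THEN iffD1]) (use trace in \<open>auto simp: sum_negf\<close>)
    thus False using unique_nonneg[of 0 1] n by auto
  qed
  then obtain i0 where i0: "i0 < n" "d i0 > 0" by blast
  have neg_others: "d i < 0" if "i < n" "i \<noteq> i0" for i
    using unique_nonneg[of i i0] that i0 by force
  have "{i. i < n \<and> d i > 0} = {i0}" using i0 neg_others by force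
  hence pos_count: "eigen_count S (\<lambda>a. a > 0) = 1"
    unfolding eigen_count_similar_mat_diag[OF wit S] by simp
  have "{i. i < n \<and> d i < 0} = {..<n} - {i0}" using i0 neg_others by force
  hence neg_count: "eigen_count S (\<lambda>a. a < 0) = n - 1"
    unfolding eigen_count_similar_mat_diag[OF wit S] using i0 by simp
  have "Determinant.det S = prod_list (map d [0..<n])"
    using det_similar[of S "mat_diag n d"] wit det_mat_diag unfolding similar_mat_def by metis
  moreover have "d i \<noteq> 0" if "i < n" for i
    using i0 neg_others[OF that] by (cases "i = i0") auto
  ultimately have "Determinant.det S \<noteq> 0"
    by (auto simp: prod_list_zero_iff)
  with pos_count neg_count show ?thesis by blast
qed

theorem lemma3:
  fixes n :: nat and v :: "nat \<Rightarrow> real^3"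
  assumes "n \<ge> 2"
    and "\<And>i. i < n \<Longrightarrow> norm (v i) = 1"
    and "\<And>i j. i < n \<Longrightarrow> j < n \<Longrightarrow> i \<noteq> j \<Longrightarrow> cross3 (v i) (v j) \<noteq> 0"
  defines "S \<equiv> Matrix.mat n n (\<lambda>(i, j). norm (cross3 (v i) (v j)))"
  shows "Determinant.det S \<noteq> 0
    \<and> eigen_count S (\<lambda>a. a > 0) = 1
    \<and> eigen_count S (\<lambda>a. a < 0) = n - 1"
proof -
  have S: "S \<in> carrier_mat n n" unfolding S_def by simp
  have entry: "S $$ (i,j) = norm (cross3 (v i) (v j))" if "i < n" "j < n" for i j
    unfolding S_def using that by simp
  show ?thesis
  proof (rule conditionally_negative_definite_signature[OF S assms(1)])
    show "S $$ (i,j) = S $$ (j,i)" if "i < n" "j < n" for i j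
      using entry[OF that] entry[OF that(2,1)] cross_skew[of "v i" "v j"] by simp
    show "S $$ (i,i) = 0" if "i < n" for i
      using entry[OF that that] by simp
    show "(\<Sum>i<n. \<Sum>j<n. x i * x j * S $$ (i,j)) < 0"
      if "(\<Sum>i<n. x i) = 0" "\<exists>i<n. x i \<noteq> 0" for x
      using cross_norm_quadratic_form_neg[OF assms(2,3) that] by (simp add: entry)
  qed
qed

end
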